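(* Let $f$ be a symmetric probability density on $\mathbb R$ with distribution function $F$ and finite variance $\sigma^2(f)=\int_{\mathbb R}x^2f(x)\,dx>0$. Put $v(x)=\int_{-\infty}^x uf(u)\,du$ and $q(s)=\int_{-\infty}^s v(x)f(x)\,dx$. Then $$12\sup_{s\in\mathbb R}q^2(s)\le\sigma^2(f),$$ with equality if and only if $f$ is the uniform density on a symmetric interval $[-a,a]$ for some $a>0$. Equivalently, the integrated Kolmogorov statistic $\bar D_n=\sup_x\big|\sqrt n\int_{-\infty}^x(F_n(t)-F(t))\,dF(t)\big|$ is locally asymptotically optimal in the Bahadur sense under the skew alternative $h(x,\theta)=2f(x)G(\theta x)$ exactly when $f$ is symmetric uniform.
   Context: $F_n$ denotes the empirical distribution function of the sample. The local Bahadur efficiency of $\bar D_n$ under the skew alternative equals $12\sup_s q^2(s)/\sigma^2(f)$, and local asymptotic optimality means that this efficiency equals $1$. *)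

theory Defs
  imports "HOL-Analysis.Analysis"
begin

definition sym_prob_density :: "(real \<Rightarrow> real) \<Rightarrow> bool" where
  "sym_prob_density f \<longleftrightarrow>
     f \<in> borel_measurable borel \<and> (\<forall>x. 0 \<le> f x) \<and>
     integrable lborel f \<and> integral\<^sup>L lborel f = 1 \<and> (\<forall>x. f (- x) = f x)"

definition sigma2 :: "(real \<Rightarrow> real) \<Rightarrow> real" where
  "sigma2 f = (LINT x|lborel. x\<^sup>2 * f x)"

definition vfun :: "(real \<Rightarrow> real) \<Rightarrow> real \<Rightarrow> real" where
  "vfun f x = (LINT u:{..x}|lborel. u * f u)"

definition qfun :: "(real \<Rightarrow> real) \<Rightarrow> real \<Rightarrow> real" where
  "qfun f s = (LINT x:{..s}|lborel. vfun f x * f x)"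

end

theory Submission
  imports Defs "HOL-Probability.Probability"
begin

text \<open>Let M be the law with density f and F its distribution function. Since v \<le> 0 and
\<integral> v dM = -\<integral> u F(u) dM, the function q decreases from 0 to -\<integral> u F(u) dM, so
sup q^2 = (\<integral> u F(u) dM)^2. Because F is continuous, F(X) is uniform on [0,1]: \<integral> F dM = 1/2 and
\<integral> F^2 dM = 1/3. As X is centred, \<integral> u F(u) dM = \<integral> u (F(u) - 1/2) dM, and the Cauchy-Schwarz
inequality against \<integral> (F - 1/2)^2 dM = 1/12 gives 12 sup q^2 \<le> \<sigma>^2(f). Equality holds iff
F(u) = 1/2 + c u for M-almost every u, and a continuous distribution function with this
property is the uniform one on [-1/(2c), 1/(2c)].\<close>

lemma discriminant_le_if_quadratic_nonneg:
  fixes A B C :: real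
  assumes "0 \<le> A" and nonneg: "\<And>t. 0 \<le> A * t\<^sup>2 - 2 * B * t + C"
  shows "B\<^sup>2 \<le> A * C"
proof (cases "A = 0")
  case True
  show ?thesis
  proof (cases "B = 0")
    case False
    with True nonneg[of "(C + 1) / (2 * B)"] show ?thesis by simp
  qed (use True in simp)
next
  case False
  with assms(1) have A: "0 < A" by simp
  have "0 \<le> A * (B / A)\<^sup>2 - 2 * B * (B / A) + C" by (rule nonneg)
  also have "\<dots> = (A * C - B\<^sup>2) / A" using A by (simp add: field_simps power2_eq_square)
  finally show ?thesis using A by (simp add: zero_le_divide_iff)
qed

lemma discriminant_ge_if_quadratic_root:
  fixes A B C t :: real
  assumes "A * t\<^sup>2 - 2 * B * t + C = 0"
  shows "A * C \<le> B\<^sup>2"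
proof -
  have "A * C = A * (2 * B * t - A * t\<^sup>2)" using assms by simp
  then have "(A * t - B)\<^sup>2 = B\<^sup>2 - A * C" by (simp add: power2_eq_square algebra_simps)
  then show ?thesis by (metis diff_ge_0_iff_ge zero_le_power2)
qed

lemma square_affine_residual_expand:
  fixes t u y :: real
  shows "(t * u - (y - 1 / 2))\<^sup>2 = t\<^sup>2 * u\<^sup>2 - 2 * t * (u * y) + t * u + (y - 1 / 2)\<^sup>2"
  by (simp add: power2_eq_square algebra_simps)

lemma (in finite_measure) integrable_bounded_real:
  fixes f :: "'a \<Rightarrow> real"
  assumes "f \<in> borel_measurable M" "\<And>x. \<bar>f x\<bar> \<le> B"
  shows "integrable M f"
  using assms by (intro integrable_const_bound[where B=B]) auto

locale atomless_real_distribution = real_distribution +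
  assumes measure_singleton: "measure M {x} = 0"
begin

lemma AE_neq: "AE y in M. y \<noteq> u"
proof -
  have "{u} \<in> null_sets M" using measure_singleton[of u]
    by (simp add: null_sets_def emeasure_eq_measure)
  then show ?thesis by (rule AE_I') auto
qed

lemma cdf_measurable[measurable]: "cdf M \<in> borel_measurable borel"
  by (rule borel_measurable_mono) (auto simp: mono_def cdf_nondecreasing)

lemma abs_cdf_le_1: "\<bar>cdf M u\<bar> \<le> 1"
  using cdf_nonneg[of u] cdf_bounded_prob[of u] by linarith

lemma cdf_continuous: "continuous_on UNIV (cdf M)"
  using isCont_cdf measure_singleton by (simp add: continuous_on_eq_continuous_at)

lemma measure_lessThan: "measure M {..<u} = cdf M u"
proof -
  have "measure M {..u} = measure M {..<u} + measure M {u}"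
    by (subst finite_measure_Union[symmetric]) (auto intro!: arg_cong[where f="measure M"])
  then show ?thesis by (simp add: cdf_def2 measure_singleton)
qed

lemma measure_atLeast: "measure M {u..} = 1 - cdf M u"
  using prob_compl[of "{..<u}"] by (simp add: measure_lessThan Compl_eq_Diff_UNIV[symmetric] Compl_lessThan)

lemma measure_greaterThan: "measure M {u<..} = 1 - cdf M u"
  using prob_compl[of "{..u}"] by (simp add: cdf_def2 Compl_eq_Diff_UNIV[symmetric] Compl_atMost)

text \<open>Adding the integrand with u and y swapped gives 1_A(u) 1_A(y) off the null diagonal,
and by Fubini both halves have the same integral.\<close>
lemma integral_ordered_pairs:
  assumes A[measurable]: "A \<in> sets borel"
  shows "(\<integral>u. (\<integral>y. (if u \<in> A \<and> y \<in> A \<and> y \<le> u then 1 else 0::real) \<partial>M) \<partial>M) = (measure M A)\<^sup>2 / 2"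
proof -
  interpret P: pair_prob_space M M by unfold_locales
  define h where "h u y = (if u \<in> A \<and> y \<in> A \<and> y \<le> u then 1 else 0::real)" for u y
  have h_int: "integrable (M \<Otimes>\<^sub>M M) (\<lambda>(u, y). h u y)"
    by (rule P.integrable_bounded_real[where B=1]) (auto simp: h_def)
  have h_int': "integrable (M \<Otimes>\<^sub>M M) (\<lambda>(u, y). h y u)"
    by (rule P.integrable_bounded_real[where B=1]) (auto simp: h_def)
  have swap: "(\<integral>y. (\<integral>u. h u y \<partial>M) \<partial>M) = (\<integral>u. (\<integral>y. h u y \<partial>M) \<partial>M)"
    by (rule P.Fubini_integral[OF h_int])
  have sum: "(\<integral>y. h u y \<partial>M) + (\<integral>y. h y u \<partial>M) = indicator A u * measure M A" for u
  proof -
    have "(\<integral>y. h u y \<partial>M) + (\<integral>y. h y u \<partial>M) = (\<integral>y. h u y + h y u \<partial>M)"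
      by (intro Bochner_Integration.integral_add[symmetric] integrable_bounded_real[where B=1])
         (auto simp: h_def)
    also have "\<dots> = (\<integral>y. indicator A u * indicator A y \<partial>M)"
      using AE_neq[of u] by (intro integral_cong_AE) (auto simp: h_def split: split_indicator)
    finally show ?thesis by simp
  qed
  have "(\<integral>u. (\<integral>y. h u y \<partial>M) \<partial>M) + (\<integral>u. (\<integral>y. h y u \<partial>M) \<partial>M)
      = (\<integral>u. indicator A u * measure M A \<partial>M)"
    using P.integrable_fst'[OF h_int] P.integrable_fst'[OF h_int']
    by (simp add: Bochner_Integration.integral_add[symmetric] sum)
  also have "\<dots> = (measure M A)\<^sup>2" by (simp add: power2_eq_square)
  finally show ?thesis using swap unfolding h_def by simp
qed

lemma integral_cdf: "(\<integral>u. cdf M u \<partial>M) = 1 / 2"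
proof -
  have "(\<integral>y. (if u \<in> UNIV \<and> y \<in> UNIV \<and> y \<le> u then 1 else 0::real) \<partial>M)
      = (\<integral>y. indicator {..u} y \<partial>M)" for u
    by (intro Bochner_Integration.integral_cong) (auto simp: indicator_def)
  then have "(\<integral>y. (if u \<in> UNIV \<and> y \<in> UNIV \<and> y \<le> u then 1 else 0::real) \<partial>M) = cdf M u" for u
    by (simp add: cdf_def2)
  then show ?thesis using integral_ordered_pairs[of UNIV] prob_space by simp
qed

lemma integral_cdf_upper_tail: "(\<integral>u. (if x \<le> u then cdf M u else 0) \<partial>M) = (1 - (cdf M x)\<^sup>2) / 2"
proof -
  interpret P: pair_prob_space M M by unfold_locales
  define h where "h u y = (if u \<in> {x..} \<and> y \<in> {x..} \<and> y \<le> u then 1 else 0::real)" for u y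
  have h_int: "integrable (M \<Otimes>\<^sub>M M) (\<lambda>(u, y). h u y)"
    by (rule P.integrable_bounded_real[where B=1]) (auto simp: h_def)
  have split: "(if x \<le> u then cdf M u else 0) = (\<integral>y. h u y \<partial>M) + indicator {x..} u * cdf M x" for u
  proof (cases "x \<le> u")
    case True
    have "(\<integral>y. h u y + indicator {..<x} y \<partial>M) = (\<integral>y. indicator {..u} y \<partial>M)"
      using True by (intro Bochner_Integration.integral_cong) (auto simp: h_def split: split_indicator)
    moreover have "integrable M (h u)" "integrable M (indicator {..<x} :: real \<Rightarrow> real)"
      by (rule integrable_bounded_real[where B=1]; auto simp: h_def[abs_def] split: split_indicator)+
    then have "(\<integral>y. h u y + indicator {..<x} y \<partial>M) = (\<integral>y. h u y \<partial>M) + measure M {..<x}"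
      by (subst Bochner_Integration.integral_add) auto
    ultimately show ?thesis using True by (simp add: cdf_def2 measure_lessThan)
  qed (simp add: h_def)
  have "(\<integral>u. (if x \<le> u then cdf M u else 0) \<partial>M)
      = (\<integral>u. (\<integral>y. h u y \<partial>M) \<partial>M) + (\<integral>u. indicator {x..} u * cdf M x \<partial>M)"
    unfolding split using P.integrable_fst'[OF h_int]
    by (intro Bochner_Integration.integral_add) (auto simp: less_top[symmetric])
  also have "(\<integral>u. (\<integral>y. h u y \<partial>M) \<partial>M) = (1 - cdf M x)\<^sup>2 / 2"
    unfolding h_def using integral_ordered_pairs[of "{x..}"] by (simp add: measure_atLeast)
  also have "(\<integral>u. indicator {x..} u * cdf M x \<partial>M) = (1 - cdf M x) * cdf M x"
    by (simp add: measure_atLeast)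
  finally show ?thesis by (simp add: power2_eq_square field_simps)
qed

lemma integral_cdf_squared: "(\<integral>u. (cdf M u)\<^sup>2 \<partial>M) = 1 / 3"
proof -
  interpret P: pair_prob_space M M by unfold_locales
  define h where "h u x = (if x \<le> u then cdf M u else 0::real)" for u x
  have h_int: "integrable (M \<Otimes>\<^sub>M M) (\<lambda>(u, x). h u x)"
    by (rule P.integrable_bounded_real[where B=1]) (auto simp: h_def abs_cdf_le_1)
  have inner: "(\<integral>x. h u x \<partial>M) = (cdf M u)\<^sup>2" for u
  proof -
    have "(\<integral>x. h u x \<partial>M) = (\<integral>x. cdf M u * indicator {..u} x \<partial>M)"
      by (intro Bochner_Integration.integral_cong) (auto simp: h_def)
    then show ?thesis by (simp add: cdf_def2 power2_eq_square)
  qed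
  have "(\<integral>u. (cdf M u)\<^sup>2 \<partial>M) = (\<integral>u. (\<integral>x. h u x \<partial>M) \<partial>M)"
    by (simp add: inner)
  also have "\<dots> = (\<integral>x. (\<integral>u. h u x \<partial>M) \<partial>M)"
    using P.Fubini_integral[OF h_int] by simp
  also have "\<dots> = (\<integral>x. (1 - (cdf M x)\<^sup>2) / 2 \<partial>M)"
    by (simp add: h_def integral_cdf_upper_tail)
  also have "\<dots> = 1 / 2 - (\<integral>x. (cdf M x)\<^sup>2 \<partial>M) / 2"
    using integrable_bounded_real[of "\<lambda>x. (cdf M x)\<^sup>2" 1] prob_space
    by (simp add: diff_divide_distrib abs_cdf_le_1 abs_square_le_1)
  finally show ?thesis by simp
qed

lemma integrable_centred_cdf_squared: "integrable M (\<lambda>u. (cdf M u - 1 / 2)\<^sup>2)"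
proof (rule integrable_bounded_real[where B=1])
  fix u
  have "\<bar>cdf M u - 1 / 2\<bar> \<le> 1" using cdf_nonneg[of u] cdf_bounded_prob[of u] by linarith
  then show "\<bar>(cdf M u - 1 / 2)\<^sup>2\<bar> \<le> 1" by (simp add: abs_square_le_1)
qed simp

lemma integral_centred_cdf_squared: "(\<integral>u. (cdf M u - 1 / 2)\<^sup>2 \<partial>M) = 1 / 12"
proof -
  have int_cdf: "integrable M (cdf M)"
    by (rule integrable_bounded_real[where B=1]) (simp_all add: abs_cdf_le_1)
  have int_cdf_sq: "integrable M (\<lambda>u. (cdf M u)\<^sup>2)"
    by (rule integrable_bounded_real[where B=1]) (simp_all add: abs_cdf_le_1 abs_square_le_1)
  have "(\<lambda>u. (cdf M u - 1 / 2)\<^sup>2) = (\<lambda>u. (cdf M u)\<^sup>2 - cdf M u + 1 / 4)"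
    by (simp add: fun_eq_iff power2_eq_square algebra_simps)
  then show ?thesis
    using int_cdf int_cdf_sq prob_space by (simp add: integral_cdf integral_cdf_squared)
qed

lemma measure_eq_0_if_AE_disjoint:
  assumes "AE u in M. u \<in> D" and "Z \<in> sets borel" and "Z \<inter> D = {}"
  shows "measure M Z = 0"
  using assms by (subst prob_eq_0) (auto elim: AE_mp)

lemma cdf_eq_cdf_support_below:
  assumes "closed D" and D: "AE u in M. u \<in> D" and "D \<inter> {..x} \<noteq> {}"
  obtains d where "d \<in> D" "d \<le> x" "cdf M x = cdf M d"
proof -
  define d where "d = Sup (D \<inter> {..x})"
  have bdd: "bdd_above (D \<inter> {..x})" by (auto intro: bdd_aboveI[where M=x])
  have "d \<in> D \<inter> {..x}"
    unfolding d_def using assms(1,3) bdd by (intro closed_contains_Sup closed_Int) auto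
  moreover have "cdf M x = cdf M d"
  proof (cases "d < x")
    case True
    have "{d<..x} \<inter> D = {}" using cSup_upper[OF _ bdd] by (force simp: d_def)
    then show ?thesis using cdf_diff_eq[OF True] measure_eq_0_if_AE_disjoint[OF D] by simp
  qed (use \<open>d \<in> D \<inter> {..x}\<close> in auto)
  ultimately show thesis using that by auto
qed

lemma cdf_eq_cdf_support_above:
  assumes "closed D" and D: "AE u in M. u \<in> D" and "D \<inter> {x..} \<noteq> {}"
  obtains e where "e \<in> D" "x \<le> e" "cdf M x = cdf M e"
proof -
  define e where "e = Inf (D \<inter> {x..})"
  have bdd: "bdd_below (D \<inter> {x..})" by (auto intro: bdd_belowI[where m=x])
  have "e \<in> D \<inter> {x..}"
    unfolding e_def using assms(1,3) bdd by (intro closed_contains_Inf closed_Int) auto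
  moreover have "cdf M x = cdf M e"
  proof (cases "x < e")
    case True
    have AE: "AE u in M. u \<in> D - {e}" using D AE_neq[of e] by eventually_elim auto
    have "{x<..e} \<inter> (D - {e}) = {}" using cInf_lower[OF _ bdd] by (force simp: e_def)
    then show ?thesis using cdf_diff_eq[OF True] measure_eq_0_if_AE_disjoint[OF AE] by simp
  qed (use \<open>e \<in> D \<inter> {x..}\<close> in auto)
  ultimately show thesis using that by auto
qed

text \<open>The exceptional null set may contain whole intervals, but F is constant on them,
so continuity of F transports the identity from the support to every x.\<close>
lemma cdf_eq_clamp_if_AE_affine:
  assumes "0 < c" and affine: "AE u in M. cdf M u = 1 / 2 + c * u"
  shows "cdf M x = max 0 (min 1 (1 / 2 + c * x))"
proof -
  define D where "D = {u. cdf M u = 1 / 2 + c * u}"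
  have "closed D" unfolding D_def by (intro closed_Collect_eq cdf_continuous continuous_intros)
  have D: "AE u in M. u \<in> D" using affine by (simp add: D_def)
  have below: "cdf M x \<le> 1 / 2 + c * x \<or> cdf M x = 0"
  proof (cases "D \<inter> {..x} = {}")
    case True
    then show ?thesis using measure_eq_0_if_AE_disjoint[OF D] by (simp add: cdf_def2 Int_commute)
  next
    case False
    then obtain d where "d \<in> D" "d \<le> x" "cdf M x = cdf M d"
      using cdf_eq_cdf_support_below[OF \<open>closed D\<close> D] by blast
    then show ?thesis using \<open>0 < c\<close> by (simp add: D_def mult_left_mono)
  qed
  have above: "1 / 2 + c * x \<le> cdf M x \<or> cdf M x = 1"
  proof (cases "D \<inter> {x..} = {}")
    case True
    then show ?thesis using measure_eq_0_if_AE_disjoint[OF D] measure_atLeast[of x] by (simp add: Int_commute)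
  next
    case False
    then obtain e where "e \<in> D" "x \<le> e" "cdf M x = cdf M e"
      using cdf_eq_cdf_support_above[OF \<open>closed D\<close> D] by blast
    then show ?thesis using \<open>0 < c\<close> by (simp add: D_def mult_left_mono)
  qed
  show ?thesis using below above cdf_nonneg[of x] cdf_bounded_prob[of x] by auto
qed

end

definition truncated_mean :: "real measure \<Rightarrow> real \<Rightarrow> real" where
  "truncated_mean M x = (\<integral>u. (if u \<le> x then u else 0) \<partial>M)"

definition cumulative_truncated_mean :: "real measure \<Rightarrow> real \<Rightarrow> real" where
  "cumulative_truncated_mean M s = (\<integral>x. (if x \<le> s then truncated_mean M x else 0) \<partial>M)"

definition cdf_covariance :: "real measure \<Rightarrow> real" where
  "cdf_covariance M = (\<integral>u. u * cdf M u \<partial>M)"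

lemma (in real_distribution) truncated_mean_measurable[measurable]:
  "truncated_mean M \<in> borel_measurable borel"
  unfolding truncated_mean_def by measurable

locale centred_real_distribution = atomless_real_distribution +
  assumes integrable_square: "integrable M (\<lambda>x. x\<^sup>2)"
    and mean_zero: "(\<integral>x. x \<partial>M) = 0"
begin

lemma integrable_abs_self: "integrable M (\<lambda>x. \<bar>x\<bar>)"
proof (rule Bochner_Integration.integrable_bound)
  show "integrable M (\<lambda>x. 1 + x\<^sup>2)" using integrable_square by simp
  have "\<bar>x\<bar> \<le> 1 + x\<^sup>2" for x :: real
    using zero_le_power2[of "\<bar>x\<bar> - 1"] unfolding power2_diff power2_abs by simp
  then show "AE x in M. norm \<bar>x\<bar> \<le> norm (1 + x\<^sup>2)" by auto
qed simp

lemma integrable_id: "integrable M (\<lambda>x. x)"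
  using integrable_abs_iff[of "\<lambda>x. x" M] integrable_abs_self by simp

lemma integrable_truncated: "integrable M (\<lambda>u. if P u then u else 0)"
  if [measurable]: "Measurable.pred borel P"
proof (rule Bochner_Integration.integrable_bound[OF integrable_abs_self])
  show "(\<lambda>u. if P u then u else 0) \<in> borel_measurable M" by measurable
qed (rule AE_I2, simp)

lemma integrable_truncated_below: "integrable M (\<lambda>u. if u \<le> x then u else 0)"
  by (rule integrable_truncated) measurable

lemma integrable_truncated_above: "integrable M (\<lambda>u. if x < u then u else 0)"
  by (rule integrable_truncated) measurable

lemma truncated_mean_nonpos: "truncated_mean M x \<le> 0"
proof (cases "x \<le> 0")
  case True
  have "AE u in M. (if u \<le> x then u else 0) \<le> 0" using True by (intro AE_I2) simp
  then show ?thesis unfolding truncated_mean_def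
    by (rule integral_le_const[OF integrable_truncated_below])
next
  case False
  have "truncated_mean M x = (\<integral>u. u - (if x < u then u else 0) \<partial>M)"
    unfolding truncated_mean_def by (intro Bochner_Integration.integral_cong) auto
  also have "\<dots> = - (\<integral>u. (if x < u then u else 0) \<partial>M)"
    using integrable_id integrable_truncated_above by (simp add: mean_zero)
  also have "\<dots> \<le> 0"
    using False by (simp add: integral_nonneg_AE)
  finally show ?thesis .
qed

lemma abs_truncated_mean_le: "\<bar>truncated_mean M x\<bar> \<le> (\<integral>u. \<bar>u\<bar> \<partial>M)"
proof -
  have "\<bar>truncated_mean M x\<bar> \<le> (\<integral>u. \<bar>if u \<le> x then u else 0\<bar> \<partial>M)"
    unfolding truncated_mean_def by (rule integral_abs_bound)
  also have "\<dots> \<le> (\<integral>u. \<bar>u\<bar> \<partial>M)"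
    by (intro integral_mono integrable_abs_self Bochner_Integration.integrable_abs
        integrable_truncated_below) auto
  finally show ?thesis .
qed

lemma integrable_truncated_mean: "integrable M (\<lambda>x. if P x then truncated_mean M x else 0)"
  if [measurable]: "Measurable.pred borel P"
  by (rule integrable_bounded_real[where B="\<integral>u. \<bar>u\<bar> \<partial>M"])
     (use abs_truncated_mean_le in auto)

lemma integrable_mult_cdf: "integrable M (\<lambda>u. u * cdf M u)"
  by (rule Bochner_Integration.integrable_bound[OF integrable_abs_self])
     (auto intro!: AE_I2 mult_left_le simp: abs_mult cdf_nonneg cdf_bounded_prob)

lemma integral_truncated_mean: "(\<integral>x. truncated_mean M x \<partial>M) = - cdf_covariance M"
proof -
  interpret P: pair_prob_space M M by unfold_locales
  define g where "g x u = (if u \<le> x then u else 0::real)" for x u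
  have g_int: "integrable (M \<Otimes>\<^sub>M M) (\<lambda>(x, u). g x u)"
  proof (rule P.Fubini_integrable)
    show "integrable M (\<lambda>x. \<integral>u. norm (case (x, u) of (x, u) \<Rightarrow> g x u) \<partial>M)"
    proof (rule integrable_bounded_real[where B="\<integral>u. \<bar>u\<bar> \<partial>M"])
      fix x
      have "(\<integral>u. \<bar>g x u\<bar> \<partial>M) \<le> (\<integral>u. \<bar>u\<bar> \<partial>M)"
        unfolding g_def
        by (intro integral_mono integrable_abs_self Bochner_Integration.integrable_abs
            integrable_truncated_below) auto
      then show "\<bar>\<integral>u. norm (case (x, u) of (x, u) \<Rightarrow> g x u) \<partial>M\<bar> \<le> (\<integral>u. \<bar>u\<bar> \<partial>M)" by simp
    qed (simp add: g_def)
  qed (simp_all add: g_def integrable_truncated_below)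
  have inner: "(\<integral>x. g x u \<partial>M) = u - u * cdf M u" for u
  proof -
    have "(\<integral>x. g x u \<partial>M) = (\<integral>x. u * indicator {u..} x \<partial>M)"
      by (intro Bochner_Integration.integral_cong) (auto simp: g_def)
    then show ?thesis by (simp add: measure_atLeast algebra_simps)
  qed
  have "(\<integral>x. truncated_mean M x \<partial>M) = (\<integral>u. (\<integral>x. g x u \<partial>M) \<partial>M)"
    using P.Fubini_integral[OF g_int] by (simp add: truncated_mean_def g_def)
  also have "\<dots> = (\<integral>u. u \<partial>M) - cdf_covariance M"
    unfolding inner cdf_covariance_def by (rule Bochner_Integration.integral_diff[OF integrable_id integrable_mult_cdf])
  finally show ?thesis by (simp add: mean_zero)
qed

lemma cdf_covariance_nonneg: "0 \<le> cdf_covariance M"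
proof -
  have "0 \<le> (\<integral>x. - truncated_mean M x \<partial>M)"
    by (intro integral_nonneg_AE AE_I2) (simp add: truncated_mean_nonpos)
  then show ?thesis by (simp add: integral_truncated_mean)
qed

lemma integral_truncated_mean_split:
  "(\<integral>x. truncated_mean M x \<partial>M)
    = cumulative_truncated_mean M s + (\<integral>x. (if s < x then truncated_mean M x else 0) \<partial>M)"
proof -
  have "(\<integral>x. truncated_mean M x \<partial>M)
      = (\<integral>x. (if x \<le> s then truncated_mean M x else 0) + (if s < x then truncated_mean M x else 0) \<partial>M)"
    by (intro Bochner_Integration.integral_cong) auto
  then show ?thesis unfolding cumulative_truncated_mean_def
    by (simp add: Bochner_Integration.integral_add integrable_truncated_mean)
qed

lemma cumulative_truncated_mean_bounds:
  "- cdf_covariance M \<le> cumulative_truncated_mean M s" "cumulative_truncated_mean M s \<le> 0"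
proof -
  have "0 \<le> (\<integral>x. - (if s < x then truncated_mean M x else 0) \<partial>M)"
    by (intro integral_nonneg_AE AE_I2) (simp add: truncated_mean_nonpos)
  then show "- cdf_covariance M \<le> cumulative_truncated_mean M s"
    using integral_truncated_mean_split[of s] integral_truncated_mean by simp
  have "0 \<le> (\<integral>x. - (if x \<le> s then truncated_mean M x else 0) \<partial>M)"
    by (intro integral_nonneg_AE AE_I2) (simp add: truncated_mean_nonpos)
  then show "cumulative_truncated_mean M s \<le> 0" by (simp add: cumulative_truncated_mean_def)
qed

lemma tendsto_cumulative_truncated_mean:
  "(cumulative_truncated_mean M \<longlongrightarrow> - cdf_covariance M) at_top"
proof -
  let ?B = "\<integral>u. \<bar>u\<bar> \<partial>M"
  have tail: "\<bar>cumulative_truncated_mean M s - - cdf_covariance M\<bar> \<le> ?B * (1 - cdf M s)" for s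
  proof -
    have int_tail: "integrable M (\<lambda>x. if s < x then truncated_mean M x else 0)"
      by (rule integrable_truncated_mean) measurable
    have int_bound: "integrable M (\<lambda>x. ?B * indicator {s<..} x)"
      by (intro integrable_mult_right integrable_real_indicator) (auto simp: less_top[symmetric])
    have "\<bar>cumulative_truncated_mean M s - - cdf_covariance M\<bar>
        = \<bar>\<integral>x. (if s < x then truncated_mean M x else 0) \<partial>M\<bar>"
      using integral_truncated_mean_split[of s] integral_truncated_mean by simp
    also have "\<dots> \<le> (\<integral>x. \<bar>if s < x then truncated_mean M x else 0\<bar> \<partial>M)"
      by (rule integral_abs_bound)
    also have "\<dots> \<le> (\<integral>x. ?B * indicator {s<..} x \<partial>M)"
      using abs_truncated_mean_le
      by (intro integral_mono Bochner_Integration.integrable_abs int_tail int_bound)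
         (simp split: split_indicator)
    also have "\<dots> = ?B * (1 - cdf M s)" by (simp add: measure_greaterThan)
    finally show ?thesis .
  qed
  have "((\<lambda>s. ?B * (1 - cdf M s)) \<longlongrightarrow> ?B * (1 - 1)) at_top"
    by (intro tendsto_intros cdf_lim_at_top_prob)
  then have lim: "((\<lambda>s. ?B * (1 - cdf M s)) \<longlongrightarrow> 0) at_top" by simp
  have bound: "\<forall>s. norm (cumulative_truncated_mean M s - - cdf_covariance M) \<le> ?B * (1 - cdf M s)"
    using tail unfolding real_norm_def by blast
  have "((\<lambda>s. cumulative_truncated_mean M s - - cdf_covariance M) \<longlongrightarrow> 0) at_top"
    by (rule Lim_null_comparison[OF always_eventually[OF bound] lim])
  then show ?thesis by (rule LIM_zero_cancel)
qed

lemma SUP_cumulative_truncated_mean_squared: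
  "(SUP s. (cumulative_truncated_mean M s)\<^sup>2) = (cdf_covariance M)\<^sup>2"
proof (rule antisym)
  have bound: "(cumulative_truncated_mean M s)\<^sup>2 \<le> (cdf_covariance M)\<^sup>2" for s
    using cumulative_truncated_mean_bounds[of s] by (simp add: abs_le_square_iff[symmetric])
  then show "(SUP s. (cumulative_truncated_mean M s)\<^sup>2) \<le> (cdf_covariance M)\<^sup>2"
    by (intro cSUP_least) auto
  have "((\<lambda>s. (cumulative_truncated_mean M s)\<^sup>2) \<longlongrightarrow> (- cdf_covariance M)\<^sup>2) at_top"
    by (intro tendsto_intros tendsto_cumulative_truncated_mean)
  then have "(- cdf_covariance M)\<^sup>2 \<le> (SUP s. (cumulative_truncated_mean M s)\<^sup>2)"
    by (rule tendsto_upperbound) (auto intro!: always_eventually cSUP_upper bdd_aboveI2 bound)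
  then show "(cdf_covariance M)\<^sup>2 \<le> (SUP s. (cumulative_truncated_mean M s)\<^sup>2)" by simp
qed

lemma integrable_cdf_residual_squared: "integrable M (\<lambda>u. (t * u - (cdf M u - 1 / 2))\<^sup>2)"
  unfolding square_affine_residual_expand
  using integrable_square integrable_mult_cdf integrable_id integrable_centred_cdf_squared
  by (intro Bochner_Integration.integrable_add Bochner_Integration.integrable_diff
      integrable_mult_right)

lemma integral_cdf_residual_squared:
  "(\<integral>u. (t * u - (cdf M u - 1 / 2))\<^sup>2 \<partial>M)
    = (\<integral>u. u\<^sup>2 \<partial>M) * t\<^sup>2 - 2 * cdf_covariance M * t + 1 / 12"
  unfolding square_affine_residual_expand
  using integrable_square integrable_mult_cdf integrable_id integrable_centred_cdf_squared
  by (simp add: mean_zero integral_centred_cdf_squared cdf_covariance_def)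

lemma twelve_cdf_covariance_squared_le: "12 * (cdf_covariance M)\<^sup>2 \<le> (\<integral>u. u\<^sup>2 \<partial>M)"
proof -
  have "(cdf_covariance M)\<^sup>2 \<le> (\<integral>u. u\<^sup>2 \<partial>M) * (1 / 12)"
  proof (rule discriminant_le_if_quadratic_nonneg)
    fix t
    show "0 \<le> (\<integral>u. u\<^sup>2 \<partial>M) * t\<^sup>2 - 2 * cdf_covariance M * t + 1 / 12"
      unfolding integral_cdf_residual_squared[symmetric] by simp
  qed simp
  then show ?thesis by simp
qed

lemma twelve_cdf_covariance_squared_eq_iff:
  assumes pos: "0 < (\<integral>u. u\<^sup>2 \<partial>M)"
  shows "12 * (cdf_covariance M)\<^sup>2 = (\<integral>u. u\<^sup>2 \<partial>M)
    \<longleftrightarrow> (\<exists>c>0. AE u in M. cdf M u = 1 / 2 + c * u)"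
proof
  assume eq: "12 * (cdf_covariance M)\<^sup>2 = (\<integral>u. u\<^sup>2 \<partial>M)"
  define c where "c = cdf_covariance M / (\<integral>u. u\<^sup>2 \<partial>M)"
  have "cdf_covariance M \<noteq> 0" using eq pos by auto
  then have "0 < c" using cdf_covariance_nonneg pos by (simp add: c_def)
  have "(\<integral>u. (c * u - (cdf M u - 1 / 2))\<^sup>2 \<partial>M) = 0"
    using eq pos unfolding integral_cdf_residual_squared
    by (simp add: c_def field_simps power2_eq_square)
  then have "AE u in M. (c * u - (cdf M u - 1 / 2))\<^sup>2 = 0"
    by (simp add: integral_nonneg_eq_0_iff_AE[OF integrable_cdf_residual_squared])
  then have "AE u in M. cdf M u = 1 / 2 + c * u" by eventually_elim simp
  with \<open>0 < c\<close> show "\<exists>c>0. AE u in M. cdf M u = 1 / 2 + c * u" by blast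
next
  assume "\<exists>c>0. AE u in M. cdf M u = 1 / 2 + c * u"
  then obtain c where "AE u in M. cdf M u = 1 / 2 + c * u" by blast
  then have "(\<integral>u. (c * u - (cdf M u - 1 / 2))\<^sup>2 \<partial>M) = (\<integral>u. 0 \<partial>M)"
    by (intro integral_cong_AE) (auto elim: AE_mp)
  then have "(\<integral>u. u\<^sup>2 \<partial>M) * (1 / 12) \<le> (cdf_covariance M)\<^sup>2"
    by (intro discriminant_ge_if_quadratic_root[of _ c]) (simp add: integral_cdf_residual_squared)
  then show "12 * (cdf_covariance M)\<^sup>2 = (\<integral>u. u\<^sup>2 \<partial>M)"
    using twelve_cdf_covariance_squared_le by simp
qed

end

definition sym_uniform :: "real \<Rightarrow> real measure" where
  "sym_uniform a = density lborel (\<lambda>x. ennreal (indicator {-a..a} x / (2 * a)))"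

lemma sets_sym_uniform[simp]: "sets (sym_uniform a) = sets borel"
  by (simp add: sym_uniform_def)

lemma emeasure_sym_uniform:
  assumes "0 < a" and [measurable]: "A \<in> sets borel"
  shows "emeasure (sym_uniform a) A = ennreal (1 / (2 * a)) * emeasure lborel (A \<inter> {-a..a})"
proof -
  have "emeasure (sym_uniform a) A
      = (\<integral>\<^sup>+ x. ennreal (indicator {-a..a} x / (2 * a)) * indicator A x \<partial>lborel)"
    unfolding sym_uniform_def by (rule emeasure_density) auto
  also have "\<dots> = (\<integral>\<^sup>+ x. ennreal (1 / (2 * a)) * indicator (A \<inter> {-a..a}) x \<partial>lborel)"
    by (intro nn_integral_cong) (auto split: split_indicator)
  also have "\<dots> = ennreal (1 / (2 * a)) * emeasure lborel (A \<inter> {-a..a})"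
    by (rule nn_integral_cmult_indicator) auto
  finally show ?thesis .
qed

lemma real_distribution_sym_uniform:
  assumes "0 < a"
  shows "real_distribution (sym_uniform a)"
proof -
  have "emeasure (sym_uniform a) UNIV = 1"
    using emeasure_sym_uniform[OF assms, of UNIV] assms by (simp add: ennreal_mult[symmetric])
  then have "prob_space (sym_uniform a)"
    by (intro prob_spaceI) (simp add: sym_uniform_def)
  then show ?thesis by (simp add: real_distribution_def real_distribution_axioms_def)
qed

lemma cdf_sym_uniform:
  assumes "0 < a"
  shows "cdf (sym_uniform a) x = max 0 (min 1 (1 / 2 + 1 / (2 * a) * x))"
proof -
  have emeasure: "emeasure (sym_uniform a) {..x} = ennreal (1 / (2 * a)) * emeasure lborel ({..x} \<inter> {-a..a})"
    using emeasure_sym_uniform[OF assms, of "{..x}"] by simp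
  consider "x < -a" | "-a \<le> x" "x \<le> a" | "a < x" by linarith
  then show ?thesis
  proof cases
    case 1
    then have "{..x} \<inter> {-a..a} = {}" by auto
    then show ?thesis using emeasure 1 assms by (simp add: cdf_def measure_def field_simps)
  next
    case 2
    then have "{..x} \<inter> {-a..a} = {-a..x}" by auto
    then have "measure (sym_uniform a) {..x} = 1 / (2 * a) * (x + a)"
      using emeasure 2 assms by (simp add: measure_def ennreal_mult[symmetric] enn2real_mult)
    then show ?thesis using 2 assms by (simp add: cdf_def field_simps)
  next
    case 3
    then have "{..x} \<inter> {-a..a} = {-a..a}" by auto
    then have "measure (sym_uniform a) {..x} = 1"
      using emeasure 3 assms by (simp add: measure_def ennreal_mult[symmetric] enn2real_mult)
    then show ?thesis using 3 assms by (simp add: cdf_def field_simps)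
  qed
qed

lemma AE_sym_uniform: "AE x in sym_uniform a. x \<in> {-a..a}"
  unfolding sym_uniform_def by (subst AE_density) (auto split: split_indicator)

lemma (in atomless_real_distribution) AE_cdf_affine_iff_sym_uniform:
  "(\<exists>c>0. AE u in M. cdf M u = 1 / 2 + c * u) \<longleftrightarrow> (\<exists>a>0. M = sym_uniform a)"
proof
  assume "\<exists>c>0. AE u in M. cdf M u = 1 / 2 + c * u"
  then obtain c where "0 < c" and affine: "AE u in M. cdf M u = 1 / 2 + c * u" by blast
  define a where "a = 1 / (2 * c)"
  have "0 < a" using \<open>0 < c\<close> by (simp add: a_def)
  then have "cdf M = cdf (sym_uniform a)"
    using cdf_eq_clamp_if_AE_affine[OF \<open>0 < c\<close> affine] cdf_sym_uniform by (simp add: fun_eq_iff a_def mult.commute)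
  moreover have "real_distribution M" by unfold_locales
  ultimately have "M = sym_uniform a"
    using cdf_unique real_distribution_sym_uniform[OF \<open>0 < a\<close>] by blast
  with \<open>0 < a\<close> show "\<exists>a>0. M = sym_uniform a" by blast
next
  assume "\<exists>a>0. M = sym_uniform a"
  then obtain a where "0 < a" and M: "M = sym_uniform a" by blast
  have "AE u in M. cdf M u = 1 / 2 + 1 / (2 * a) * u"
    unfolding M using AE_sym_uniform[of a]
    by eventually_elim (use \<open>0 < a\<close> in \<open>auto simp: cdf_sym_uniform field_simps\<close>)
  then show "\<exists>c>0. AE u in M. cdf M u = 1 / 2 + c * u"
    using \<open>0 < a\<close> by (intro exI[of _ "1 / (2 * a)"]) simp
qed

lemma density_eq_sym_uniform_iff:
  assumes "f \<in> borel_measurable borel" and "\<And>x. 0 \<le> f x" and "0 < a"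
  shows "density lborel (\<lambda>x. ennreal (f x)) = sym_uniform a
    \<longleftrightarrow> (AE x in lborel. f x = indicator {-a..a} x / (2 * a))"
proof -
  have "ennreal (f x) = ennreal (indicator {-a..a} x / (2 * a))
      \<longleftrightarrow> f x = indicator {-a..a} x / (2 * a)" for x
    using assms(2,3) by (intro ennreal_inj) auto
  then show ?thesis
    unfolding sym_uniform_def using assms(1)
    by (subst sigma_finite_measure.density_unique_iff[OF sigma_finite_lborel]) simp_all
qed

lemma real_distribution_density:
  assumes "sym_prob_density f"
  shows "real_distribution (density lborel (\<lambda>x. ennreal (f x)))"
proof -
  from assms have [measurable]: "f \<in> borel_measurable borel" and nonneg: "\<And>x. 0 \<le> f x"
    and "integrable lborel f" and "integral\<^sup>L lborel f = 1"
    unfolding sym_prob_density_def by auto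
  then have "emeasure (density lborel (\<lambda>x. ennreal (f x))) UNIV = 1"
    by (simp add: emeasure_density nn_integral_eq_integral)
  then have "prob_space (density lborel (\<lambda>x. ennreal (f x)))"
    by (intro prob_spaceI) simp
  then show ?thesis by (simp add: real_distribution_def real_distribution_axioms_def)
qed

lemma centred_real_distribution_density:
  assumes dens: "sym_prob_density f" and finvar: "integrable lborel (\<lambda>x. x\<^sup>2 * f x)"
  shows "centred_real_distribution (density lborel (\<lambda>x. ennreal (f x)))"
proof -
  let ?M = "density lborel (\<lambda>x. ennreal (f x))"
  from dens have [measurable]: "f \<in> borel_measurable borel" and nonneg: "\<And>x. 0 \<le> f x"
    and symmetric: "\<And>x. f (- x) = f x"
    unfolding sym_prob_density_def by auto
  interpret real_distribution ?M using dens by (rule real_distribution_density)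
  have "emeasure ?M {x} = 0" for x
    by (simp add: emeasure_density nn_integral_null_set)
  then have atomless: "measure ?M {x} = 0" for x by (simp add: measure_def)
  have "(\<integral>x. f x * x \<partial>lborel) = (\<integral>x. f (- x) * (- x) \<partial>lborel)"
    using lborel_integral_real_affine[of "-1" "\<lambda>x. f x * x" 0] by simp
  then have "(\<integral>x. f x * x \<partial>lborel) = 0" by (simp add: symmetric)
  then have "(\<integral>x. x \<partial>?M) = 0" using nonneg by (simp add: integral_density)
  moreover have "integrable ?M (\<lambda>x. x\<^sup>2)"
    using finvar nonneg by (simp add: integrable_density mult.commute)
  ultimately show ?thesis
    using atomless by unfold_locales auto
qed

lemma sigma2_eq_second_moment:
  assumes "sym_prob_density f"
  shows "sigma2 f = (\<integral>x. x\<^sup>2 \<partial>density lborel (\<lambda>x. ennreal (f x)))"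
  using assms by (simp add: sigma2_def sym_prob_density_def integral_density mult.commute)

lemma vfun_eq_truncated_mean:
  assumes "sym_prob_density f"
  shows "vfun f x = truncated_mean (density lborel (\<lambda>x. ennreal (f x))) x"
proof -
  have "truncated_mean (density lborel (\<lambda>x. ennreal (f x))) x
      = (\<integral>u. f u * (if u \<le> x then u else 0) \<partial>lborel)"
    using assms by (simp add: truncated_mean_def sym_prob_density_def integral_density)
  also have "\<dots> = vfun f x" unfolding vfun_def set_lebesgue_integral_def
    by (intro Bochner_Integration.integral_cong) (auto simp: indicator_def)
  finally show ?thesis by simp
qed

lemma qfun_eq_cumulative_truncated_mean:
  assumes "sym_prob_density f"
  shows "qfun f s = cumulative_truncated_mean (density lborel (\<lambda>x. ennreal (f x))) s"
proof -
  let ?M = "density lborel (\<lambda>x. ennreal (f x))"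
  interpret real_distribution ?M using assms by (rule real_distribution_density)
  have "cumulative_truncated_mean ?M s
      = (\<integral>x. f x * (if x \<le> s then truncated_mean ?M x else 0) \<partial>lborel)"
    using assms by (simp add: cumulative_truncated_mean_def sym_prob_density_def integral_density)
  also have "\<dots> = (\<integral>x. f x * (if x \<le> s then vfun f x else 0) \<partial>lborel)"
    unfolding vfun_eq_truncated_mean[OF assms] ..
  also have "\<dots> = qfun f s" unfolding qfun_def set_lebesgue_integral_def
    by (intro Bochner_Integration.integral_cong) (auto simp: indicator_def)
  finally show ?thesis by simp
qed

theorem mainTheorem2:
  fixes f :: "real \<Rightarrow> real"
  assumes dens: "sym_prob_density f"
    and finvar: "integrable lborel (\<lambda>x. x\<^sup>2 * f x)"
    and pos: "sigma2 f > 0"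
  shows "12 * (SUP s. (qfun f s)\<^sup>2) \<le> sigma2 f \<and>
         (12 * (SUP s. (qfun f s)\<^sup>2) = sigma2 f \<longleftrightarrow>
           (\<exists>a>0. AE x in lborel. f x = indicator {-a..a} x / (2 * a)))"
proof -
  let ?M = "density lborel (\<lambda>x. ennreal (f x))"
  interpret centred_real_distribution ?M
    using dens finvar by (rule centred_real_distribution_density)
  have sup: "(SUP s. (qfun f s)\<^sup>2) = (cdf_covariance ?M)\<^sup>2"
    using dens by (simp add: qfun_eq_cumulative_truncated_mean SUP_cumulative_truncated_mean_squared)
  have sigma: "sigma2 f = (\<integral>x. x\<^sup>2 \<partial>?M)"
    using dens by (rule sigma2_eq_second_moment)
  have uniform: "(\<exists>a>0. ?M = sym_uniform a)
      \<longleftrightarrow> (\<exists>a>0. AE x in lborel. f x = indicator {-a..a} x / (2 * a))"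
    using dens density_eq_sym_uniform_iff[of f] by (auto simp: sym_prob_density_def)
  show ?thesis
    using twelve_cdf_covariance_squared_le twelve_cdf_covariance_squared_eq_iff pos
      AE_cdf_affine_iff_sym_uniform uniform
    by (simp add: sup sigma)
qed

end
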